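(* $Spec_B(A)$ is a topological space whose closed subsets are the sets $\mathcal{V}(b)=\{p\in Spec_B(A)\mid b\leq p\}$ with $b\in B$. Dually, its open subsets are the sets $\mathcal{U}(b)=\{p\in Spec_B(A)\mid b\nleq p\}$ with $b\in B$.
   Context: Let $A$ be a quasi-quantale, i.e. a complete $\bigvee$-semilattice (with bottom $0$ and top $1$) equipped with an associative product $A\times A\to A$ such that $(\bigvee X)a=\bigvee\{xa\mid x\in X\}$ and $a(\bigvee Y)=\bigvee\{ay\mid y\in Y\}$ for all directed subsets $X,Y\subseteq A$ and all $a\in A$. Let $B$ be a subquasi-quantale of $A$, i.e. a sub-$\bigvee$-semilattice of $A$ closed under the product on which these two directed distributive laws hold for all directed $X,Y\subseteq B$ and $a\in B$. Assume moreover that $0,1\in B$ and that $1b\leq b$ and $b1\leq b$ for all $b\in B$. An element $1\neq p\in A$ is prime relative to $B$ if whenever $ab\leq p$ with $a,b\in B$ then $a\leq p$ or $b\leq p$; $Spec_B(A)$ denotes the set of all elements of $A$ that are prime relative to $B$. *)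

theory Defs
  imports "HOL-Analysis.Abstract_Topology"
begin

definition directed_set :: "'a::order set \<Rightarrow> bool" where
  "directed_set X \<longleftrightarrow> X \<noteq> {} \<and> (\<forall>x\<in>X. \<forall>y\<in>X. \<exists>z\<in>X. x \<le> z \<and> y \<le> z)"

definition quasi_quantale :: "'a::{complete_lattice,semigroup_mult} itself \<Rightarrow> bool" where
  "quasi_quantale _ \<longleftrightarrow>
     (\<forall>X::'a set. \<forall>a. directed_set X \<longrightarrow> Sup X * a = Sup {x * a | x. x \<in> X}) \<and>
     (\<forall>Y::'a set. \<forall>a. directed_set Y \<longrightarrow> a * Sup Y = Sup {a * y | y. y \<in> Y})"

definition subquasi_quantale :: "'a::{complete_lattice,semigroup_mult} set \<Rightarrow> bool" where
  "subquasi_quantale B \<longleftrightarrow>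
     (\<forall>S\<subseteq>B. Sup S \<in> B) \<and> (\<forall>a\<in>B. \<forall>b\<in>B. a * b \<in> B) \<and>
     (\<forall>X\<subseteq>B. \<forall>a\<in>B. directed_set X \<longrightarrow> Sup X * a = Sup {x * a | x. x \<in> X}) \<and>
     (\<forall>Y\<subseteq>B. \<forall>a\<in>B. directed_set Y \<longrightarrow> a * Sup Y = Sup {a * y | y. y \<in> Y})"

definition prime_rel :: "'a::{complete_lattice,semigroup_mult} set \<Rightarrow> 'a \<Rightarrow> bool" where
  "prime_rel B p \<longleftrightarrow> p \<noteq> top \<and>
     (\<forall>a\<in>B. \<forall>b\<in>B. a * b \<le> p \<longrightarrow> a \<le> p \<or> b \<le> p)"

definition Spec :: "'a::{complete_lattice,semigroup_mult} set \<Rightarrow> 'a set" where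
  "Spec B = {p. prime_rel B p}"

definition V_set :: "'a::{complete_lattice,semigroup_mult} set \<Rightarrow> 'a \<Rightarrow> 'a set" where
  "V_set B b = {p \<in> Spec B. b \<le> p}"

definition U_set :: "'a::{complete_lattice,semigroup_mult} set \<Rightarrow> 'a \<Rightarrow> 'a set" where
  "U_set B b = {p \<in> Spec B. \<not> b \<le> p}"

end

theory Submission
  imports Defs
begin

text \<open>The sets \<open>\<U>(b)\<close> turn products into intersections and joins into unions, and
  \<open>\<U>(1)\<close> is the whole spectrum, so for \<open>b \<in> B\<close> they form a topology on \<open>Spec\<^sub>B(A)\<close>;
  the closed sets are their complements \<open>\<V>(b)\<close>. Products go to intersections because
  \<open>ab \<le> a1 \<le> a\<close> and \<open>ab \<le> 1b \<le> b\<close>, using that multiplication is monotone, which in a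
  quasi-quantale follows from distributivity over the directed set \<open>{x, y}\<close> for \<open>x \<le> y\<close>.\<close>

lemma quasi_quantale_mult_mono:
  fixes x y a :: "'a::{complete_lattice,semigroup_mult}"
  assumes "quasi_quantale TYPE('a)" and "x \<le> y"
  shows "x * a \<le> y * a" and "a * x \<le> a * y"
proof -
  have dir: "directed_set {x, y}"
    using \<open>x \<le> y\<close> unfolding directed_set_def by auto
  have Sup_xy: "Sup {x, y} = y"
    using \<open>x \<le> y\<close> by (simp add: sup_absorb2)
  have "y * a = Sup {z * a | z. z \<in> {x, y}}"
    using assms(1) dir Sup_xy unfolding quasi_quantale_def by metis
  also have "\<dots> = Sup {x * a, y * a}"
    by (rule arg_cong[where f = Sup]) auto
  finally show "x * a \<le> y * a" by (metis Sup_upper insertI1)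
  have "a * y = Sup {a * z | z. z \<in> {x, y}}"
    using assms(1) dir Sup_xy unfolding quasi_quantale_def by metis
  also have "\<dots> = Sup {a * x, a * y}"
    by (rule arg_cong[where f = Sup]) auto
  finally show "a * x \<le> a * y" by (metis Sup_upper insertI1)
qed

lemma U_set_subset_Spec: "U_set B b \<subseteq> Spec B"
  unfolding U_set_def by auto

lemma V_set_eq_Diff_U_set: "V_set B b = Spec B - U_set B b"
  unfolding U_set_def V_set_def by auto

lemma U_set_top: "U_set B top = Spec B"
  unfolding U_set_def Spec_def prime_rel_def by (auto simp: top_unique)

lemma U_set_Sup: "U_set B (Sup X) = (\<Union>x\<in>X. U_set B x)"
  unfolding U_set_def by (auto simp: Sup_le_iff)

lemma U_set_mult:
  assumes "a \<in> B" "b \<in> B" "a * b \<le> a" "a * b \<le> b"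
  shows "U_set B (a * b) = U_set B a \<inter> U_set B b"
  using assms order_trans unfolding U_set_def Spec_def prime_rel_def by blast

locale Spec_base =
  fixes B :: "'a::{complete_lattice,semigroup_mult} set"
  assumes Sup_closed: "S \<subseteq> B \<Longrightarrow> Sup S \<in> B"
    and mult_closed: "a \<in> B \<Longrightarrow> b \<in> B \<Longrightarrow> a * b \<in> B"
    and mult_le_left: "a \<in> B \<Longrightarrow> b \<in> B \<Longrightarrow> a * b \<le> a"
    and mult_le_right: "a \<in> B \<Longrightarrow> b \<in> B \<Longrightarrow> a * b \<le> b"
    and top_closed: "top \<in> B"
begin

definition Spec_topology :: "'a topology" where
  "Spec_topology = topology (\<lambda>S. \<exists>b\<in>B. S = U_set B b)"

lemma istopology_U_sets: "istopology (\<lambda>S. \<exists>b\<in>B. S = U_set B b)"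
  unfolding istopology_def
proof (intro conjI allI impI)
  fix S T assume "\<exists>a\<in>B. S = U_set B a" "\<exists>b\<in>B. T = U_set B b"
  then obtain a b where "a \<in> B" "b \<in> B" "S = U_set B a" "T = U_set B b"
    by blast
  then show "\<exists>c\<in>B. S \<inter> T = U_set B c"
    using U_set_mult mult_closed mult_le_left mult_le_right by metis
next
  fix K assume "\<forall>S\<in>K. \<exists>b\<in>B. S = U_set B b"
  then obtain f where f: "\<And>S. S \<in> K \<Longrightarrow> f S \<in> B \<and> S = U_set B (f S)"
    by metis
  have "\<Union>K = U_set B (Sup (f ` K))"
    unfolding U_set_Sup using f by auto
  moreover have "Sup (f ` K) \<in> B"
    using f by (intro Sup_closed) auto
  ultimately show "\<exists>b\<in>B. \<Union>K = U_set B b" by blast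
qed

lemma openin_Spec_topology: "openin Spec_topology S \<longleftrightarrow> (\<exists>b\<in>B. S = U_set B b)"
  unfolding Spec_topology_def using istopology_U_sets by simp

lemma topspace_Spec_topology: "topspace Spec_topology = Spec B"
proof -
  have "openin Spec_topology (Spec B)"
    using U_set_top top_closed openin_Spec_topology by metis
  moreover have "openin Spec_topology S \<Longrightarrow> S \<subseteq> Spec B" for S
    using U_set_subset_Spec openin_Spec_topology by blast
  ultimately show ?thesis
    unfolding topspace_def by blast
qed

lemma closedin_Spec_topology: "closedin Spec_topology S \<longleftrightarrow> (\<exists>b\<in>B. S = V_set B b)"
proof -
  have "closedin Spec_topology S \<longleftrightarrow> S \<subseteq> Spec B \<and> (\<exists>b\<in>B. Spec B - S = U_set B b)"
    unfolding closedin_def topspace_Spec_topology openin_Spec_topology ..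
  also have "\<dots> \<longleftrightarrow> (\<exists>b\<in>B. S = V_set B b)"
    unfolding V_set_eq_Diff_U_set using U_set_subset_Spec by blast
  finally show ?thesis .
qed

end

theorem proposition3p18:
  fixes B :: "'a::{complete_lattice,semigroup_mult} set"
  assumes "quasi_quantale TYPE('a)"
    and "subquasi_quantale B"
    and "bot \<in> B" and "top \<in> B"
    and "\<And>b. b \<in> B \<Longrightarrow> top * b \<le> b"
    and "\<And>b. b \<in> B \<Longrightarrow> b * top \<le> b"
  shows "\<exists>T::'a topology. topspace T = Spec B \<and>
           (\<forall>S. closedin T S \<longleftrightarrow> (\<exists>b\<in>B. S = V_set B b)) \<and>
           (\<forall>S. openin T S \<longleftrightarrow> (\<exists>b\<in>B. S = U_set B b))"
proof -
  interpret Spec_base B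
  proof
    show "S \<subseteq> B \<Longrightarrow> Sup S \<in> B" "a \<in> B \<Longrightarrow> b \<in> B \<Longrightarrow> a * b \<in> B" for S a b
      using assms(2) unfolding subquasi_quantale_def by blast+
    show "a * b \<le> a" if "a \<in> B" for a b
      using quasi_quantale_mult_mono(2)[OF assms(1) top_greatest] assms(6)[OF that]
      by (rule order_trans)
    show "a * b \<le> b" if "b \<in> B" for a b
      using quasi_quantale_mult_mono(1)[OF assms(1) top_greatest] assms(5)[OF that]
      by (rule order_trans)
  qed (fact assms(4))
  show ?thesis
    using topspace_Spec_topology closedin_Spec_topology openin_Spec_topology by blast
qed

end
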